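(* Let $n=3$, $I_1=\{1,2\}$, $I_2=\{2,3\}$, $f=x_1x_2+x_2^2x_3$, $g_1=x_2^3$, $g_2=-x_2^3$, $g_3=x_3$, and $S(g)=\{x\in\mathbb R^3: g_1(x)\ge0,g_2(x)\ge0,g_3(x)\ge0\}$ (so $f=0$ on $S(g)$). Let $\theta_1=1+x_1^2+x_2^2$, $\theta_2=1+x_2^2+x_3^2$, $\Theta_1=\theta_1(1+x_2^2)$, $\Theta_2=\theta_2(1+x_2^2)$. Then: (1) $f$ cannot be written as $\sigma_1+\psi_1g_1+\sigma_2+\sigma_3g_3$ with $\sigma_1\in\Sigma[x(I_1)]$, $\psi_1\in\mathbb R[x(I_1)]$, $\sigma_2,\sigma_3\in\Sigma[x(I_2)]$; (2) for every $\varepsilon>0$ there exist $k\in\mathbb N$, $\sigma_1\in\Sigma[x(I_1)]_{2k+2}$, $\psi_1\in\mathbb R[x(I_1)]_{4k+1}$, $\sigma_2\in\Sigma[x(I_2)]_{2k+2}$, $\sigma_3\in\Sigma[x(I_2)]_{4k+3}$ such that $$f+\varepsilon(\theta_1^2+\theta_2^2)=\frac{\sigma_1+\psi_1g_1}{\Theta_1^k}+\frac{\sigma_2+\sigma_3g_3}{\Theta_2^k}.$$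
   Context: For $T\subseteq\{1,\dots,n\}$, $x(T)=(x_i)_{i\in T}$; $\mathbb R[x(T)]$ is the ring of polynomials in $x(T)$ and $\mathbb R[x(T)]_t$ its elements of degree at most $t$; $\Sigma[x(T)]$ is the set of sums of squares of polynomials in $x(T)$ and $\Sigma[x(T)]_t$ the sums of squares of elements of $\mathbb R[x(T)]_t$. *)

theory Defs
  imports Complex_Main
begin

text \<open>Points of R^n are represented as functions x :: nat => real; only the
coordinates x 1, ..., x n matter. A real polynomial in the variables x(T) is
represented by its polynomial function (over the infinite field R, polynomials
and polynomial functions correspond bijectively).\<close>

definition mono_exps :: "nat set \<Rightarrow> nat \<Rightarrow> (nat \<Rightarrow> nat) set" where
  "mono_exps T t = {\<alpha>. (\<forall>i. i \<notin> T \<longrightarrow> \<alpha> i = 0) \<and> sum \<alpha> T \<le> t}"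

definition poly_deg :: "nat set \<Rightarrow> nat \<Rightarrow> ((nat \<Rightarrow> real) \<Rightarrow> real) set" where
  "poly_deg T t = {p. \<exists>c :: (nat \<Rightarrow> nat) \<Rightarrow> real.
      \<forall>x. p x = (\<Sum>\<alpha>\<in>mono_exps T t. c \<alpha> * (\<Prod>i\<in>T. x i ^ \<alpha> i))}"

definition poly_in :: "nat set \<Rightarrow> ((nat \<Rightarrow> real) \<Rightarrow> real) set" where
  "poly_in T = (\<Union>t. poly_deg T t)"

definition sos_deg :: "nat set \<Rightarrow> nat \<Rightarrow> ((nat \<Rightarrow> real) \<Rightarrow> real) set" where
  "sos_deg T t = {p. \<exists>qs. (\<forall>q\<in>set qs. q \<in> poly_deg T t) \<and>
      (\<forall>x. p x = (\<Sum>q\<leftarrow>qs. (q x)\<^sup>2))}"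

definition sos_in :: "nat set \<Rightarrow> ((nat \<Rightarrow> real) \<Rightarrow> real) set" where
  "sos_in T = {p. \<exists>qs. (\<forall>q\<in>set qs. q \<in> poly_in T) \<and>
      (\<forall>x. p x = (\<Sum>q\<leftarrow>qs. (q x)\<^sup>2))}"

definition ex_f :: "(nat \<Rightarrow> real) \<Rightarrow> real" where
  "ex_f x = x 1 * x 2 + (x 2)\<^sup>2 * x 3"
definition ex_g1 :: "(nat \<Rightarrow> real) \<Rightarrow> real" where "ex_g1 x = (x 2) ^ 3"
definition ex_g2 :: "(nat \<Rightarrow> real) \<Rightarrow> real" where "ex_g2 x = - ((x 2) ^ 3)"
definition ex_g3 :: "(nat \<Rightarrow> real) \<Rightarrow> real" where "ex_g3 x = x 3"
definition ex_theta1 :: "(nat \<Rightarrow> real) \<Rightarrow> real" where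
  "ex_theta1 x = 1 + (x 1)\<^sup>2 + (x 2)\<^sup>2"
definition ex_theta2 :: "(nat \<Rightarrow> real) \<Rightarrow> real" where
  "ex_theta2 x = 1 + (x 2)\<^sup>2 + (x 3)\<^sup>2"
definition ex_Theta1 :: "(nat \<Rightarrow> real) \<Rightarrow> real" where
  "ex_Theta1 x = ex_theta1 x * (1 + (x 2)\<^sup>2)"
definition ex_Theta2 :: "(nat \<Rightarrow> real) \<Rightarrow> real" where
  "ex_Theta2 x = ex_theta2 x * (1 + (x 2)\<^sup>2)"

end

theory Submission
  imports Defs
begin

text \<open>
(1) On the curve \<open>x = (1, b, 0)\<close> the polynomial \<open>f\<close> equals \<open>b\<close>, while a certificate
\<open>\<sigma>\<^sub>1 + \<psi>\<^sub>1 g\<^sub>1 + \<sigma>\<^sub>2 + \<sigma>\<^sub>3 g\<^sub>3\<close> is at least \<open>\<psi>\<^sub>1(1, b, 0) b\<^sup>2 \<cdot> b\<close>. As \<open>b \<rightarrow> 0\<^sup>-\<close> the factor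
\<open>\<psi>\<^sub>1(1, b, 0) b\<^sup>2\<close> tends to \<open>0\<close>, so the certificate eventually exceeds \<open>b\<close>.

(2) Already \<open>k = 0\<close> works. The cross term \<open>x\<^sub>1 x\<^sub>2\<close> is produced by the square
\<open>(\<surd>(2\<epsilon>) x\<^sub>1 + x\<^sub>2 / (2\<surd>(2\<epsilon>)))\<^sup>2\<close>; this leaves \<open>\<epsilon> + (2\<epsilon> - 1/(8\<epsilon>)) x\<^sub>2\<^sup>2\<close>, possibly with a
negative coefficient, which becomes the square \<open>(\<surd>\<epsilon> + r x\<^sub>2\<^sup>2)\<^sup>2\<close> once \<open>\<psi>\<^sub>1 g\<^sub>1 = -r\<^sup>2 x\<^sub>2\<^sup>4\<close> is
added; the term \<open>x\<^sub>2\<^sup>2 x\<^sub>3\<close> of \<open>f\<close> is \<open>\<sigma>\<^sub>3 g\<^sub>3\<close> with \<open>\<sigma>\<^sub>3 = x\<^sub>2\<^sup>2\<close>.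
\<close>


lemma finite_mono_exps:
  assumes "finite T"
  shows "finite (mono_exps T t)"
proof (rule finite_subset)
  show "mono_exps T t \<subseteq> {\<alpha>. \<forall>i. (i \<in> T \<longrightarrow> \<alpha> i \<in> {..t}) \<and> (i \<notin> T \<longrightarrow> \<alpha> i = 0)}"
  proof (safe, goal_cases)
    case (1 \<alpha> i)
    then have "\<alpha> i \<le> sum \<alpha> T"
      using assms by (intro member_le_sum) auto
    with 1 show ?case by (simp add: mono_exps_def)
  qed (simp add: mono_exps_def)
  show "finite {\<alpha>. \<forall>i. (i \<in> T \<longrightarrow> \<alpha> i \<in> {..t}) \<and> (i \<notin> T \<longrightarrow> (\<alpha> i :: nat) = 0)}"
    by (rule finite_set_of_finite_funs) (use assms in auto)
qed

lemma monomial_in_poly_deg: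
  assumes "finite T" "\<beta> \<in> mono_exps T t"
  shows "(\<lambda>x. \<Prod>i\<in>T. x i ^ \<beta> i) \<in> poly_deg T t"
proof -
  have "(\<Sum>\<alpha>\<in>mono_exps T t. (if \<alpha> = \<beta> then 1 else 0) * (\<Prod>i\<in>T. x i ^ \<alpha> i))
      = (\<Sum>\<alpha>\<in>mono_exps T t. if \<alpha> = \<beta> then (\<Prod>i\<in>T. x i ^ \<alpha> i) else 0)"
    for x :: "nat \<Rightarrow> real"
    by (rule sum.cong) auto
  also have "\<dots> x = (\<Prod>i\<in>T. x i ^ \<beta> i)" for x :: "nat \<Rightarrow> real"
    using finite_mono_exps[OF assms(1)] assms(2) by (simp add: sum.delta)
  finally show ?thesis
    unfolding poly_deg_def by (auto intro!: exI[of _ "\<lambda>\<alpha>. if \<alpha> = \<beta> then 1 else 0"])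
qed

lemma poly_deg_add:
  assumes "p \<in> poly_deg T t" "q \<in> poly_deg T t"
  shows "(\<lambda>x. p x + q x) \<in> poly_deg T t"
proof -
  obtain c d where
    "\<forall>x. p x = (\<Sum>\<alpha>\<in>mono_exps T t. c \<alpha> * (\<Prod>i\<in>T. x i ^ \<alpha> i))"
    "\<forall>x. q x = (\<Sum>\<alpha>\<in>mono_exps T t. d \<alpha> * (\<Prod>i\<in>T. x i ^ \<alpha> i))"
    using assms unfolding poly_deg_def by blast
  then have "\<forall>x. p x + q x = (\<Sum>\<alpha>\<in>mono_exps T t. (c \<alpha> + d \<alpha>) * (\<Prod>i\<in>T. x i ^ \<alpha> i))"
    by (simp add: distrib_right sum.distrib)
  then show ?thesis
    unfolding poly_deg_def mem_Collect_eq by (rule exI[of _ "\<lambda>\<alpha>. c \<alpha> + d \<alpha>"])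
qed

lemma poly_deg_cmult:
  assumes "p \<in> poly_deg T t"
  shows "(\<lambda>x. a * p x) \<in> poly_deg T t"
proof -
  obtain c where "\<forall>x. p x = (\<Sum>\<alpha>\<in>mono_exps T t. c \<alpha> * (\<Prod>i\<in>T. x i ^ \<alpha> i))"
    using assms unfolding poly_deg_def by blast
  then have "\<forall>x. a * p x = (\<Sum>\<alpha>\<in>mono_exps T t. (a * c \<alpha>) * (\<Prod>i\<in>T. x i ^ \<alpha> i))"
    by (simp add: sum_distrib_left mult.assoc)
  then show ?thesis
    unfolding poly_deg_def mem_Collect_eq by (rule exI[of _ "\<lambda>\<alpha>. a * c \<alpha>"])
qed

lemma poly_deg_divide_const:
  assumes "p \<in> poly_deg T t"
  shows "(\<lambda>x. p x / a) \<in> poly_deg T t"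
  using poly_deg_cmult[OF assms, of "inverse a"] by (simp add: divide_inverse mult.commute)

lemma poly_deg_var_power:
  assumes "finite T" "j \<in> T" "n \<le> t"
  shows "(\<lambda>x. x j ^ n) \<in> poly_deg T t"
proof -
  let ?\<beta> = "\<lambda>i. if i = j then n else 0"
  have "?\<beta> \<in> mono_exps T t"
    using assms by (auto simp: mono_exps_def sum.delta)
  moreover have "(\<Prod>i\<in>T. x i ^ ?\<beta> i) = x j ^ n" for x :: "nat \<Rightarrow> real"
    using assms by (simp add: if_distrib prod.delta cong: if_cong)
  ultimately show ?thesis
    using monomial_in_poly_deg[OF assms(1)] by fastforce
qed

lemma poly_deg_var:
  assumes "finite T" "j \<in> T" "1 \<le> t"
  shows "(\<lambda>x. x j) \<in> poly_deg T t"
  using poly_deg_var_power[OF assms] by simp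

lemma poly_deg_const:
  assumes "finite T" "j \<in> T"
  shows "(\<lambda>x. a) \<in> poly_deg T t"
  using poly_deg_cmult[OF poly_deg_var_power[OF assms, of 0 t], of a] by simp

lemma sum_squares_in_sos_deg:
  assumes "\<forall>q\<in>set qs. q \<in> poly_deg T t"
  shows "(\<lambda>x. \<Sum>q\<leftarrow>qs. (q x)\<^sup>2) \<in> sos_deg T t"
  using assms unfolding sos_deg_def by blast

lemma sos_in_nonneg: "\<sigma> \<in> sos_in T \<Longrightarrow> 0 \<le> \<sigma> x"
  unfolding sos_in_def by (auto intro!: sum_list_nonneg)

lemma continuous_on_poly_in_compose:
  assumes "p \<in> poly_in T" "\<And>i. continuous_on S (\<lambda>b. \<gamma> b i)"
  shows "continuous_on S (\<lambda>b. p (\<gamma> b))"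
proof -
  obtain t c where "\<forall>x. p x = (\<Sum>\<alpha>\<in>mono_exps T t. c \<alpha> * (\<Prod>i\<in>T. x i ^ \<alpha> i))"
    using assms(1) unfolding poly_in_def poly_deg_def by blast
  then show ?thesis
    by (simp add: continuous_intros assms(2))
qed

lemma ex_f_no_sparse_certificate:
  assumes \<sigma>1: "\<sigma>1 \<in> sos_in {1,2}" and \<psi>1: "\<psi>1 \<in> poly_in {1,2}"
    and \<sigma>2: "\<sigma>2 \<in> sos_in {2,3}"
    and certificate: "\<forall>x. ex_f x = \<sigma>1 x + \<psi>1 x * ex_g1 x + \<sigma>2 x + \<sigma>3 x * ex_g3 x"
  shows False
proof -
  define \<gamma> :: "real \<Rightarrow> nat \<Rightarrow> real" where
    "\<gamma> b = (\<lambda>i. if i = 1 then 1 else if i = 2 then b else 0)" for b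
  define h where "h b = \<psi>1 (\<gamma> b) * b\<^sup>2" for b
  have "continuous_on UNIV (\<lambda>b. \<gamma> b i)" for i
    by (cases "i = 1"; cases "i = 2") (simp_all add: \<gamma>_def)
  then have "continuous_on UNIV (\<lambda>b. \<psi>1 (\<gamma> b))"
    by (rule continuous_on_poly_in_compose[OF \<psi>1])
  then have "(h \<longlongrightarrow> h 0) (at_left 0)"
    unfolding h_def by (intro tendsto_intros filterlim_at_split[THEN iffD1, THEN conjunct1])
      (simp add: continuous_on_eq_continuous_at isCont_def)
  then have "eventually (\<lambda>b. h b < 1) (at_left 0)"
    by (rule order_tendstoD) (simp add: h_def)
  moreover have "eventually (\<lambda>b. b \<in> {-1<..<0}) (at_left (0::real))"
    by (rule eventually_at_left_real) simp
  ultimately have "eventually (\<lambda>_. False) (at_left (0::real))"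
  proof eventually_elim
    case (elim b)
    have "b = \<sigma>1 (\<gamma> b) + h b * b + \<sigma>2 (\<gamma> b)"
      using certificate[rule_format, of "\<gamma> b"]
      by (simp add: ex_f_def ex_g1_def ex_g3_def \<gamma>_def h_def power2_eq_square power3_eq_cube)
    moreover have "0 \<le> \<sigma>1 (\<gamma> b)" "0 \<le> \<sigma>2 (\<gamma> b)"
      using \<sigma>1 \<sigma>2 by (simp_all add: sos_in_nonneg)
    moreover have "h b * b > b"
      using elim mult_strict_right_mono_neg[of "h b" 1 b] by simp
    ultimately show False by linarith
  qed
  then show False by simp
qed

lemma perturbed_cross_term_identity:
  fixes e s w r u v :: real
  assumes "s\<^sup>2 = e" "w\<^sup>2 = 2 * e" "w \<noteq> 0" "2 * s * r = 2 * e - 1 / (8 * e)"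
  shows "u * v + e * (1 + u\<^sup>2 + v\<^sup>2)\<^sup>2
       = (s + r * v\<^sup>2)\<^sup>2 + (w * u + v / (2 * w))\<^sup>2 + (s * (u\<^sup>2 + v\<^sup>2))\<^sup>2 - r\<^sup>2 * v * v ^ 3"
proof -
  have "(s + r * v\<^sup>2)\<^sup>2 = s\<^sup>2 + (2 * s * r) * v\<^sup>2 + r\<^sup>2 * v ^ 4"
    by (simp add: power2_eq_square power4_eq_xxxx algebra_simps)
  then have square1: "(s + r * v\<^sup>2)\<^sup>2 = e + (2 * e - 1 / (8 * e)) * v\<^sup>2 + r\<^sup>2 * v ^ 4"
    by (simp only: assms(1,4))
  have square2: "(w * u + v / (2 * w))\<^sup>2 = 2 * e * u\<^sup>2 + u * v + v\<^sup>2 / (8 * e)"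
    using assms(3) by (simp add: power2_sum power_mult_distrib power_divide assms(2))
  have square3: "(s * (u\<^sup>2 + v\<^sup>2))\<^sup>2 = e * (u\<^sup>2 + v\<^sup>2)\<^sup>2"
    by (simp add: power_mult_distrib assms(1))
  show ?thesis
    unfolding square1 square2 square3
    by (simp add: field_simps power2_eq_square power4_eq_xxxx power3_eq_cube)
qed

lemma ex_f_perturbed_sparse_certificate:
  fixes e :: real
  assumes "e > 0"
  shows "\<exists>\<sigma>1 \<psi>1 \<sigma>2 \<sigma>3.
    \<sigma>1 \<in> sos_deg {1,2} 2 \<and> \<psi>1 \<in> poly_deg {1,2} 1 \<and>
    \<sigma>2 \<in> sos_deg {2,3} 2 \<and> \<sigma>3 \<in> sos_deg {2,3} 3 \<and>
    (\<forall>x. ex_f x + e * ((ex_theta1 x)\<^sup>2 + (ex_theta2 x)\<^sup>2) =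
         \<sigma>1 x + \<psi>1 x * ex_g1 x + (\<sigma>2 x + \<sigma>3 x * ex_g3 x))"
proof -
  define s where "s = sqrt e"
  define w where "w = sqrt (2 * e)"
  define r where "r = (2 * e - 1 / (8 * e)) / (2 * s)"
  have params: "s\<^sup>2 = e" "w\<^sup>2 = 2 * e" "w \<noteq> 0" "2 * s * r = 2 * e - 1 / (8 * e)"
    using assms by (simp_all add: s_def w_def r_def)
  define \<sigma>1 where "\<sigma>1 x = (\<Sum>q\<leftarrow>[\<lambda>x. s + r * x 2 ^ 2, \<lambda>x. w * x 1 + x 2 / (2 * w),
    \<lambda>x. s * (x 1 ^ 2 + x 2 ^ 2)]. (q x)\<^sup>2)" for x :: "nat \<Rightarrow> real"
  define \<psi>1 where "\<psi>1 x = - (r\<^sup>2) * x 2" for x :: "nat \<Rightarrow> real"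
  define \<sigma>2 where "\<sigma>2 x = (\<Sum>q\<leftarrow>[\<lambda>x. s * (1 + x 2 ^ 2 + x 3 ^ 2)]. (q x)\<^sup>2)" for x :: "nat \<Rightarrow> real"
  define \<sigma>3 where "\<sigma>3 x = (\<Sum>q\<leftarrow>[\<lambda>x. x 2]. (q x)\<^sup>2)" for x :: "nat \<Rightarrow> real"
  have vars: "finite {1::nat, 2}" "finite {2::nat, 3}" "1 \<in> {1::nat, 2}" "2 \<in> {1::nat, 2}"
    "2 \<in> {2::nat, 3}" "3 \<in> {2::nat, 3}"
    by simp_all
  note poly_deg_intros = poly_deg_add poly_deg_cmult poly_deg_divide_const poly_deg_const
    poly_deg_var_power poly_deg_var vars
  have "\<sigma>1 \<in> sos_deg {1,2} 2"
    unfolding \<sigma>1_def[abs_def] by (intro sum_squares_in_sos_deg) (auto intro!: poly_deg_intros)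
  moreover have "\<sigma>2 \<in> sos_deg {2,3} 2"
    unfolding \<sigma>2_def[abs_def] by (intro sum_squares_in_sos_deg) (auto intro!: poly_deg_intros)
  moreover have "\<sigma>3 \<in> sos_deg {2,3} 3"
    unfolding \<sigma>3_def[abs_def] by (intro sum_squares_in_sos_deg) (auto intro!: poly_deg_intros)
  moreover have "\<psi>1 \<in> poly_deg {1,2} 1"
    unfolding \<psi>1_def[abs_def] by (intro poly_deg_cmult poly_deg_var vars) simp
  moreover have "ex_f x + e * ((ex_theta1 x)\<^sup>2 + (ex_theta2 x)\<^sup>2) =
      \<sigma>1 x + \<psi>1 x * ex_g1 x + (\<sigma>2 x + \<sigma>3 x * ex_g3 x)" for x
  proof -
    have "\<sigma>1 x + \<psi>1 x * ex_g1 x = x 1 * x 2 + e * (ex_theta1 x)\<^sup>2"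
      using perturbed_cross_term_identity[OF params, of "x 1" "x 2"]
      by (simp add: \<sigma>1_def \<psi>1_def ex_g1_def ex_theta1_def add.assoc)
    moreover have "\<sigma>2 x = e * (ex_theta2 x)\<^sup>2"
      by (simp add: \<sigma>2_def ex_theta2_def power_mult_distrib params(1))
    moreover have "\<sigma>3 x * ex_g3 x = (x 2)\<^sup>2 * x 3"
      by (simp add: \<sigma>3_def ex_g3_def)
    ultimately show ?thesis
      by (simp add: ex_f_def algebra_simps)
  qed
  ultimately show ?thesis by blast
qed

theorem mainTheorem11:
  shows "(\<not> (\<exists>\<sigma>1 \<psi>1 \<sigma>2 \<sigma>3.
            \<sigma>1 \<in> sos_in {1,2} \<and> \<psi>1 \<in> poly_in {1,2} \<and>
            \<sigma>2 \<in> sos_in {2,3} \<and> \<sigma>3 \<in> sos_in {2,3} \<and>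
            (\<forall>x. ex_f x = \<sigma>1 x + \<psi>1 x * ex_g1 x + \<sigma>2 x + \<sigma>3 x * ex_g3 x)))
     \<and> (\<forall>\<epsilon>::real. \<epsilon> > 0 \<longrightarrow>
          (\<exists>k::nat. \<exists>\<sigma>1 \<psi>1 \<sigma>2 \<sigma>3.
            \<sigma>1 \<in> sos_deg {1,2} (2*k+2) \<and> \<psi>1 \<in> poly_deg {1,2} (4*k+1) \<and>
            \<sigma>2 \<in> sos_deg {2,3} (2*k+2) \<and> \<sigma>3 \<in> sos_deg {2,3} (4*k+3) \<and>
            (\<forall>x. ex_f x + \<epsilon> * ((ex_theta1 x)\<^sup>2 + (ex_theta2 x)\<^sup>2) =
                 (\<sigma>1 x + \<psi>1 x * ex_g1 x) / (ex_Theta1 x) ^ k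
               + (\<sigma>2 x + \<sigma>3 x * ex_g3 x) / (ex_Theta2 x) ^ k)))"
proof (intro conjI allI impI)
  show "\<not> (\<exists>\<sigma>1 \<psi>1 \<sigma>2 \<sigma>3.
            \<sigma>1 \<in> sos_in {1,2} \<and> \<psi>1 \<in> poly_in {1,2} \<and>
            \<sigma>2 \<in> sos_in {2,3} \<and> \<sigma>3 \<in> sos_in {2,3} \<and>
            (\<forall>x. ex_f x = \<sigma>1 x + \<psi>1 x * ex_g1 x + \<sigma>2 x + \<sigma>3 x * ex_g3 x))"
    using ex_f_no_sparse_certificate by blast
next
  fix \<epsilon> :: real
  assume "\<epsilon> > 0"
  then show "\<exists>k::nat. \<exists>\<sigma>1 \<psi>1 \<sigma>2 \<sigma>3.
            \<sigma>1 \<in> sos_deg {1,2} (2*k+2) \<and> \<psi>1 \<in> poly_deg {1,2} (4*k+1) \<and>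
            \<sigma>2 \<in> sos_deg {2,3} (2*k+2) \<and> \<sigma>3 \<in> sos_deg {2,3} (4*k+3) \<and>
            (\<forall>x. ex_f x + \<epsilon> * ((ex_theta1 x)\<^sup>2 + (ex_theta2 x)\<^sup>2) =
                 (\<sigma>1 x + \<psi>1 x * ex_g1 x) / (ex_Theta1 x) ^ k
               + (\<sigma>2 x + \<sigma>3 x * ex_g3 x) / (ex_Theta2 x) ^ k)"
    using ex_f_perturbed_sparse_certificate[of \<epsilon>]
    by (intro exI[of _ 0]) (simp only: mult_0_right add_0 power_0 div_by_1)
qed

end
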